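(* Let $T$ be a spherically homogeneous rooted tree in which every vertex has at least $2$ children, let $G\le\mathrm{Aut}~T$ be a weakly branch group, and let $N$ be a non-trivial normal subgroup of $G$. Then $N$ is a virtual retract of $G$ if and only if $N$ has finite index in $G$.
   Context: $\mathrm{Aut}~T$ is the group of automorphisms of $T$ fixing the root; $\mathcal{L}_n$ is the $n$th level; $T_v$ is the subtree of descendants of $v$. For $G\le\mathrm{Aut}~T$, $\mathrm{rist}_G(v)$ is the subgroup of elements of $G$ fixing every vertex outside $T_v$, and $\mathrm{Rist}_G(n)=\prod_{v\in\mathcal{L}_n}\mathrm{rist}_G(v)$. $G$ is weakly branch if it acts transitively on every level of $T$ and $\mathrm{Rist}_G(n)$ is infinite for every $n\ge1$. $H\le G$ is a virtual retract of $G$ if there is a finite-index subgroup $K\le G$ containing $H$ and a homomorphism $K\to H$ restricting to the identity on $H$. *)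

theory Defs
  imports "HOL-Algebra.Algebra" "HOL-Library.Sublist"
begin

text \<open>Spherically homogeneous rooted tree with branching sequence m:
  vertices at level n are words x_0 ... x_{n-1} with x_i < m i; the root is the
  empty word, and the parent of a vertex is obtained by deleting its last letter.\<close>

definition tverts :: "(nat \<Rightarrow> nat) \<Rightarrow> nat list set" where
  "tverts m = {xs. \<forall>i<length xs. xs ! i < m i}"

definition tlevel :: "(nat \<Rightarrow> nat) \<Rightarrow> nat \<Rightarrow> nat list set" where
  "tlevel m n = {xs \<in> tverts m. length xs = n}"

text \<open>Automorphisms of the rooted tree (fixing the root): bijections of the
  vertex set preserving levels and the parent relation; extended by the identity
  outside the vertex set so that they form a group under composition.\<close>

definition is_tree_aut :: "(nat \<Rightarrow> nat) \<Rightarrow> (nat list \<Rightarrow> nat list) \<Rightarrow> bool" where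
  "is_tree_aut m g \<longleftrightarrow>
     bij_betw g (tverts m) (tverts m) \<and>
     (\<forall>v\<in>tverts m. length (g v) = length v) \<and>
     (\<forall>v\<in>tverts m. g (butlast v) = butlast (g v)) \<and>
     (\<forall>v. v \<notin> tverts m \<longrightarrow> g v = v)"

definition AutT :: "(nat \<Rightarrow> nat) \<Rightarrow> (nat list \<Rightarrow> nat list) monoid" where
  "AutT m = \<lparr>carrier = {g. is_tree_aut m g}, monoid.mult = (\<circ>), one = id\<rparr>"

definition rist :: "(nat \<Rightarrow> nat) \<Rightarrow> (nat list \<Rightarrow> nat list) set \<Rightarrow> nat list
                      \<Rightarrow> (nat list \<Rightarrow> nat list) set" where
  "rist m G v = {g \<in> G. \<forall>w\<in>tverts m. \<not> prefix v w \<longrightarrow> g w = w}"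

text \<open>Rist_G(n): the (internal, direct) product of the rigid stabilisers of the
  vertices of level n, i.e. the subgroup they generate.\<close>

definition Rist :: "(nat \<Rightarrow> nat) \<Rightarrow> (nat list \<Rightarrow> nat list) set \<Rightarrow> nat
                      \<Rightarrow> (nat list \<Rightarrow> nat list) set" where
  "Rist m G n = generate (AutT m) (\<Union>v\<in>tlevel m n. rist m G v)"

definition level_transitive :: "(nat \<Rightarrow> nat) \<Rightarrow> (nat list \<Rightarrow> nat list) set \<Rightarrow> bool" where
  "level_transitive m G \<longleftrightarrow>
     (\<forall>n. \<forall>u\<in>tlevel m n. \<forall>w\<in>tlevel m n. \<exists>g\<in>G. g u = w)"

definition weakly_branch :: "(nat \<Rightarrow> nat) \<Rightarrow> (nat list \<Rightarrow> nat list) set \<Rightarrow> bool" where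
  "weakly_branch m G \<longleftrightarrow>
     subgroup G (AutT m) \<and> level_transitive m G \<and> (\<forall>n\<ge>1. infinite (Rist m G n))"

definition virtual_retract :: "('a, 'b) monoid_scheme \<Rightarrow> 'a set \<Rightarrow> bool" where
  "virtual_retract Gr H \<longleftrightarrow>
     (\<exists>K. subgroup K Gr \<and> H \<subseteq> K \<and> finite (rcosets\<^bsub>Gr\<^esub> K) \<and>
        (\<exists>r. r \<in> hom (Gr\<lparr>carrier := K\<rparr>) (Gr\<lparr>carrier := H\<rparr>) \<and> (\<forall>h\<in>H. r h = h)))"

end

theory Submission
  imports Defs
begin

(*
  If r : K \<rightarrow> N retracts a subgroup K \<supseteq> N onto the normal subgroup N, then for k \<in> K
  the element c = k r(k)\<inverse> lies in ker r, and for n \<in> N the commutator [c, n] lies in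
  N \<inter> ker r = 1; so c centralises N. In a weakly branch group the centraliser of a
  non-trivial normal subgroup N is trivial: if g \<noteq> 1 centralised N, rigid stabilisers and
  level transitivity provide a vertex z of positive level and k \<in> N with z, g z, k z
  pairwise distinct. For a non-trivial a in the rigid stabiliser of z, the commutator
  [a, k] \<in> N acts as a on the subtree below z and trivially on the subtree below g z,
  so it cannot commute with g. Hence c = 1, K = N, and N has finite index; conversely
  K = N with r = id witnesses the virtual retract.
*)

lemma (in group) retraction_domain_eq_of_trivial_centraliser:
  assumes N: "N \<lhd> G" and K: "subgroup K G" "N \<subseteq> K"
    and r: "r \<in> hom (G\<lparr>carrier := K\<rparr>) (G\<lparr>carrier := N\<rparr>)" "\<forall>n\<in>N. r n = n"
    and centraliser: "\<And>c. c \<in> carrier G \<Longrightarrow> \<forall>n\<in>N. c \<otimes> n = n \<otimes> c \<Longrightarrow> c = \<one>"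
  shows "K = N"
proof
  interpret N: normal N G by (rule N)
  interpret K: subgroup K G by (rule K(1))
  have r_in: "\<And>x. x \<in> K \<Longrightarrow> r x \<in> N" using r(1) by (auto simp: hom_def)
  have r_mult: "\<And>x y. x \<in> K \<Longrightarrow> y \<in> K \<Longrightarrow> r (x \<otimes> y) = r x \<otimes> r y"
    using hom_mult[OF r(1)] by simp
  have r_inv: "r (inv x) = inv (r x)" if x: "x \<in> K" for x
  proof (rule sym, rule inv_equality)
    have "r (inv x) \<otimes> r x = r \<one>" using r_mult[of "inv x" x] x by simp
    then show "r (inv x) \<otimes> r x = \<one>" using r(2) by simp
  qed (use x r_in N.subset in auto)
  show "K \<subseteq> N"
  proof
    fix k assume k: "k \<in> K"
    have rk: "r k \<in> N" "r k \<in> K" using r_in[OF k] K(2) by auto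
    define c where "c = k \<otimes> inv (r k)"
    have c: "c \<in> K" "c \<in> carrier G" using k rk by (auto simp: c_def)
    have rc: "r c = \<one>"
      using r_mult[OF k K.m_inv_closed[OF rk(2)]] r_inv[OF rk(2)] r(2) rk(1) N.subset
      by (auto simp: c_def)
    have "c \<otimes> n = n \<otimes> c" if n: "n \<in> N" for n
    proof -
      have nK: "n \<in> K" "n \<in> carrier G" using n K(2) N.subset by auto
      define q where "q = c \<otimes> n \<otimes> inv c \<otimes> inv n"
      have "q \<in> N" unfolding q_def using N.inv_op_closed2[OF c(2) n] n by auto
      then have "q = r q" using r(2) by simp
      also have "\<dots> = r c \<otimes> r n \<otimes> inv (r c) \<otimes> inv (r n)"
        unfolding q_def using c nK by (simp add: r_mult r_inv)
      also have "\<dots> = \<one>" using rc r(2) n nK by simp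
      finally have "c \<otimes> n \<otimes> inv c \<otimes> inv n = \<one>" by (simp add: q_def)
      then show ?thesis using c nK
        by (metis inv_closed inv_solve_right' l_one m_closed)
    qed
    then have "c = \<one>" using centraliser c(2) by blast
    then have "k = r k" using k rk by (simp add: c_def inv_solve_right')
    with rk show "k \<in> N" by simp
  qed
qed (rule K(2))

lemma (in group) virtual_retract_imp_finite_index:
  assumes N: "N \<lhd> G" "virtual_retract G N"
    and centraliser: "\<And>c. c \<in> carrier G \<Longrightarrow> \<forall>n\<in>N. c \<otimes> n = n \<otimes> c \<Longrightarrow> c = \<one>"
  shows "finite (rcosets N)"
proof -
  obtain K r where K: "subgroup K G" "N \<subseteq> K" "finite (rcosets K)"
    and r: "r \<in> hom (G\<lparr>carrier := K\<rparr>) (G\<lparr>carrier := N\<rparr>)" "\<forall>n\<in>N. r n = n"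
    using N(2) unfolding virtual_retract_def by blast
  have "K = N" by (rule retraction_domain_eq_of_trivial_centraliser[OF N(1) K(1,2) r centraliser])
  with K(3) show ?thesis by simp
qed

lemma (in group) finite_index_imp_virtual_retract:
  "subgroup H G \<Longrightarrow> finite (rcosets H) \<Longrightarrow> virtual_retract G H"
  unfolding virtual_retract_def by (force simp: hom_def)

lemma prefixes_same_length_eq: "prefix p x \<Longrightarrow> prefix q x \<Longrightarrow> length p = length q \<Longrightarrow> p = q"
  by (metis prefix_length_prefix prefix_order.antisym order_refl)

lemma tverts_prefix_closed: "prefix p v \<Longrightarrow> v \<in> tverts m \<Longrightarrow> p \<in> tverts m"
  unfolding tverts_def prefix_def by (auto, metis nth_append trans_less_add1)

lemma tverts_append_zeros: "(\<And>i. 0 < m i) \<Longrightarrow> v \<in> tverts m \<Longrightarrow> v @ replicate k 0 \<in> tverts m"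
  by (auto simp: tverts_def nth_append)

lemma tree_aut_closed: "is_tree_aut m g \<Longrightarrow> v \<in> tverts m \<Longrightarrow> g v \<in> tverts m"
  unfolding is_tree_aut_def bij_betw_def by auto

lemma tree_aut_length: "is_tree_aut m g \<Longrightarrow> v \<in> tverts m \<Longrightarrow> length (g v) = length v"
  unfolding is_tree_aut_def by auto

lemma tree_aut_butlast: "is_tree_aut m g \<Longrightarrow> v \<in> tverts m \<Longrightarrow> g (butlast v) = butlast (g v)"
  unfolding is_tree_aut_def by auto

lemma tree_aut_outside: "is_tree_aut m g \<Longrightarrow> v \<notin> tverts m \<Longrightarrow> g v = v"
  unfolding is_tree_aut_def by auto

lemma tree_aut_inj:
  assumes g: "is_tree_aut m g"
  shows "inj g"
proof (rule injI)
  fix x y assume "g x = g y"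
  moreover have "inj_on g (tverts m)" using g by (simp add: is_tree_aut_def bij_betw_def)
  ultimately show "x = y"
    using tree_aut_closed[OF g] tree_aut_outside[OF g]
    by (cases "x \<in> tverts m"; cases "y \<in> tverts m") (auto dest: inj_onD)
qed

lemma tree_aut_prefix:
  assumes g: "is_tree_aut m g"
  shows "prefix p v \<Longrightarrow> v \<in> tverts m \<Longrightarrow> prefix (g p) (g v)"
proof (induction v rule: rev_induct)
  case (snoc x v)
  show ?case
  proof (cases "p = v @ [x]")
    case False
    have "v \<in> tverts m" using tverts_prefix_closed[of v "v @ [x]"] snoc.prems(2) by simp
    then have "prefix (g p) (g v)" using False snoc by (simp add: prefix_snoc)
    also have "g v = butlast (g (v @ [x]))" using tree_aut_butlast[OF g snoc.prems(2)] by simp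
    finally show ?thesis using prefixeq_butlast prefix_order.trans by blast
  qed simp
qed simp

lemma tree_aut_image_not_prefix:
  assumes g: "is_tree_aut m g" and "prefix p v" "v \<in> tverts m" "length q = length p" "g p \<noteq> q"
  shows "\<not> prefix q (g v)"
proof
  assume "prefix q (g v)"
  moreover have "prefix (g p) (g v)" using tree_aut_prefix[OF g] assms(2,3) .
  moreover have "length (g p) = length p"
    using tree_aut_length[OF g] tverts_prefix_closed assms(2,3) by blast
  ultimately show False using prefixes_same_length_eq assms(4,5) by metis
qed

lemma tree_aut_moves_descendants:
  "is_tree_aut m g \<Longrightarrow> g y \<noteq> y \<Longrightarrow> prefix y x \<Longrightarrow> x \<in> tverts m \<Longrightarrow> g x \<noteq> x"
  using tree_aut_image_not_prefix[of m g y x y] by auto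

lemma tree_aut_id: "is_tree_aut m id"
  unfolding is_tree_aut_def by auto

lemma tree_aut_comp:
  assumes "is_tree_aut m g" "is_tree_aut m h"
  shows "is_tree_aut m (g \<circ> h)"
proof -
  have "h v \<in> tverts m" if "v \<in> tverts m" for v using tree_aut_closed[OF assms(2) that] .
  with assms show ?thesis unfolding is_tree_aut_def by (auto intro: bij_betw_trans)
qed

lemma tree_aut_left_inverse:
  assumes g: "is_tree_aut m g"
  shows "\<exists>f. is_tree_aut m f \<and> f \<circ> g = id"
proof -
  define f where "f v = (if v \<in> tverts m then inv_into (tverts m) g v else v)" for v
  have bij: "bij_betw g (tverts m) (tverts m)" using g unfolding is_tree_aut_def by auto
  have f_bij: "bij_betw f (tverts m) (tverts m)"
    using bij_betw_inv_into[OF bij] by (rule bij_betw_cong[THEN iffD1, rotated]) (simp add: f_def)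
  have f_g: "f (g v) = v" for v
    using bij tree_aut_closed[OF g] tree_aut_outside[OF g]
    by (cases "v \<in> tverts m") (auto simp: f_def bij_betw_inv_into_left)
  have g_f: "g (f v) = v" if "v \<in> tverts m" for v
    using bij that by (simp add: f_def bij_betw_inv_into_right)
  have f_in: "f v \<in> tverts m" if "v \<in> tverts m" for v
    using f_bij that by (rule bij_betw_apply)
  have "is_tree_aut m f"
    unfolding is_tree_aut_def
  proof (intro conjI ballI allI impI f_bij)
    fix v assume v: "v \<in> tverts m"
    show "length (f v) = length v" using tree_aut_length[OF g f_in[OF v]] g_f[OF v] by simp
    have "g (butlast (f v)) = butlast v" using tree_aut_butlast[OF g f_in[OF v]] g_f[OF v] by simp
    then show "f (butlast v) = butlast (f v)" using f_g by metis
  qed (simp add: f_def)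
  with f_g show ?thesis by (intro exI[of _ f]) auto
qed

lemma AutT_carrier [simp]: "carrier (AutT m) = {g. is_tree_aut m g}"
  by (simp add: AutT_def)

lemma AutT_mult [simp]: "g \<otimes>\<^bsub>AutT m\<^esub> h = g \<circ> h"
  by (simp add: AutT_def)

lemma AutT_one [simp]: "\<one>\<^bsub>AutT m\<^esub> = id"
  by (simp add: AutT_def)

lemma AutT_group: "group (AutT m)"
proof (rule groupI)
  fix g assume "g \<in> carrier (AutT m)"
  then show "\<exists>f\<in>carrier (AutT m). f \<otimes>\<^bsub>AutT m\<^esub> g = \<one>\<^bsub>AutT m\<^esub>"
    using tree_aut_left_inverse by simp
qed (auto simp: tree_aut_comp tree_aut_id)

lemma tree_aut_inv:
  assumes "is_tree_aut m g"
  shows "is_tree_aut m (inv\<^bsub>AutT m\<^esub> g)" "(inv\<^bsub>AutT m\<^esub> g) (g x) = x" "g ((inv\<^bsub>AutT m\<^esub> g) x) = x"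
proof -
  interpret group "AutT m" by (rule AutT_group)
  have g: "g \<in> carrier (AutT m)" using assms by simp
  show "is_tree_aut m (inv\<^bsub>AutT m\<^esub> g)" using inv_closed[OF g] by simp
  show "(inv\<^bsub>AutT m\<^esub> g) (g x) = x" using l_inv[OF g] by (simp add: fun_eq_iff)
  show "g ((inv\<^bsub>AutT m\<^esub> g) x) = x" using r_inv[OF g] by (simp add: fun_eq_iff)
qed

lemma subgroup_AutT_tree_aut: "subgroup G (AutT m) \<Longrightarrow> g \<in> G \<Longrightarrow> is_tree_aut m g"
  using subgroup.mem_carrier[of G "AutT m" g] by simp

lemma subgroup_AutT_comp: "subgroup G (AutT m) \<Longrightarrow> g \<in> G \<Longrightarrow> h \<in> G \<Longrightarrow> g \<circ> h \<in> G"
  using subgroup.m_closed[of G "AutT m" g h] by simp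

lemma normal_AutT_conj:
  assumes G: "subgroup G (AutT m)" and N: "N \<lhd> (AutT m)\<lparr>carrier := G\<rparr>" and "h \<in> G" "n \<in> N"
  shows "h \<circ> n \<circ> inv\<^bsub>AutT m\<^esub> h \<in> N"
  using normal.inv_op_closed2[OF N, of h n] assms group.m_inv_consistent[OF AutT_group G]
  by simp

lemma normal_AutT_commutator:
  assumes G: "subgroup G (AutT m)" and N: "N \<lhd> (AutT m)\<lparr>carrier := G\<rparr>" and "a \<in> G" "k \<in> N"
  shows "a \<circ> k \<circ> inv\<^bsub>AutT m\<^esub> a \<circ> inv\<^bsub>AutT m\<^esub> k \<in> N"
proof -
  interpret N: normal N "(AutT m)\<lparr>carrier := G\<rparr>" by (rule N)
  have "k \<in> G" using N.subset \<open>k \<in> N\<close> by auto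
  then have "inv\<^bsub>AutT m\<^esub> k \<in> N"
    using N.m_inv_closed[OF \<open>k \<in> N\<close>] group.m_inv_consistent[OF AutT_group G] by simp
  then show ?thesis
    using subgroup.m_closed[OF normal_imp_subgroup[OF N] normal_AutT_conj[OF assms]] by simp
qed

lemma rist_maps_subtree:
  assumes a: "is_tree_aut m a" "a \<in> rist m G z" and "prefix z w" "w \<in> tverts m"
  shows "prefix z (a w)"
proof (rule ccontr)
  assume out: "\<not> prefix z (a w)"
  then have "a (a w) = a w" using a tree_aut_closed assms(4) by (simp add: rist_def)
  then have "a w = w" using tree_aut_inj[OF a(1)] by (simp add: inj_eq)
  with out assms(3) show False by simp
qed

lemma rist_inv_fixes_outside:
  assumes a: "is_tree_aut m a" "a \<in> rist m G z" and w: "w \<in> tverts m" "\<not> prefix z w"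
  shows "(inv\<^bsub>AutT m\<^esub> a) w = w"
proof -
  let ?w' = "(inv\<^bsub>AutT m\<^esub> a) w"
  have w': "?w' \<in> tverts m" using tree_aut_closed[OF tree_aut_inv(1)[OF a(1)] w(1)] .
  have a_w': "a ?w' = w" by (rule tree_aut_inv(3)[OF a(1)])
  then have "\<not> prefix z ?w'" using rist_maps_subtree[OF a _ w'] w(2) by metis
  then have "a ?w' = ?w'" using a(2) w' by (simp add: rist_def)
  with a_w' show ?thesis by simp
qed

lemma rist_conj:
  assumes G: "subgroup G (AutT m)" and h: "h \<in> G" and a: "a \<in> rist m G v"
  shows "h \<circ> a \<circ> inv\<^bsub>AutT m\<^esub> h \<in> rist m G (h v)"
  unfolding rist_def
proof (intro CollectI conjI ballI impI)
  have "a \<in> G" using a by (simp add: rist_def)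
  then show "h \<circ> a \<circ> inv\<^bsub>AutT m\<^esub> h \<in> G"
    using G h subgroup_AutT_comp subgroup.m_inv_closed[OF G h] by simp
  have h_aut: "is_tree_aut m h" using subgroup_AutT_tree_aut[OF G h] .
  fix w assume w: "w \<in> tverts m" "\<not> prefix (h v) w"
  let ?w' = "(inv\<^bsub>AutT m\<^esub> h) w"
  have w': "?w' \<in> tverts m" using tree_aut_closed[OF tree_aut_inv(1)[OF h_aut] w(1)] .
  have h_w': "h ?w' = w" by (rule tree_aut_inv(3)[OF h_aut])
  then have "\<not> prefix v ?w'" using tree_aut_prefix[OF h_aut _ w'] w(2) by metis
  then have "a ?w' = ?w'" using a w' by (simp add: rist_def)
  with h_w' show "(h \<circ> a \<circ> inv\<^bsub>AutT m\<^esub> h) w = w" by simp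
qed

lemma weakly_branch_subgroup: "weakly_branch m G \<Longrightarrow> subgroup G (AutT m)"
  by (simp add: weakly_branch_def)

lemma weakly_branch_rist_nontrivial:
  assumes wb: "weakly_branch m G" and z: "z \<in> tverts m" "1 \<le> length z"
  shows "\<exists>a\<in>rist m G z. a \<noteq> id"
proof -
  interpret A: group "AutT m" by (rule AutT_group)
  have "\<exists>v\<in>tlevel m (length z). \<exists>a\<in>rist m G v. a \<noteq> id"
  proof (rule ccontr)
    assume "\<not> ?thesis"
    then have "Rist m G (length z) \<subseteq> {\<one>\<^bsub>AutT m\<^esub>}"
      unfolding Rist_def by (intro A.generate_subgroup_incl A.triv_subgroup) auto
    then have "finite (Rist m G (length z))" using finite_subset by blast
    with wb z(2) show False by (simp add: weakly_branch_def)
  qed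
  then obtain v a where v: "v \<in> tlevel m (length z)" and a: "a \<in> rist m G v" "a \<noteq> id"
    by blast
  obtain h where h: "h \<in> G" "h v = z"
    using wb v z(1) unfolding weakly_branch_def level_transitive_def tlevel_def by blast
  have G: "subgroup G (AutT m)" using wb by (rule weakly_branch_subgroup)
  have h_aut: "is_tree_aut m h" using subgroup_AutT_tree_aut[OF G h(1)] .
  obtain p where "a p \<noteq> p" using a(2) by (auto simp: fun_eq_iff)
  then have "(h \<circ> a \<circ> inv\<^bsub>AutT m\<^esub> h) (h p) \<noteq> h p"
    using tree_aut_inv(2)[OF h_aut] tree_aut_inj[OF h_aut] by (simp add: inj_eq)
  then have "h \<circ> a \<circ> inv\<^bsub>AutT m\<^esub> h \<noteq> id" by (metis id_apply)
  with rist_conj[OF G h(1) a(1)] h(2) show ?thesis by auto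
qed

lemma rist_commutator_not_commuting:
  assumes g: "is_tree_aut m g" and k: "is_tree_aut m k" and a: "is_tree_aut m a"
    and a_rist: "a \<in> rist m G z" "a \<noteq> id"
    and moved: "g z \<noteq> z" "k z \<noteq> z" "k z \<noteq> g z"
  shows "g \<circ> (a \<circ> k \<circ> inv\<^bsub>AutT m\<^esub> a \<circ> inv\<^bsub>AutT m\<^esub> k)
           \<noteq> (a \<circ> k \<circ> inv\<^bsub>AutT m\<^esub> a \<circ> inv\<^bsub>AutT m\<^esub> k) \<circ> g"
proof
  let ?c = "a \<circ> k \<circ> inv\<^bsub>AutT m\<^esub> a \<circ> inv\<^bsub>AutT m\<^esub> k"
    and ?k' = "inv\<^bsub>AutT m\<^esub> k"
  assume commute: "g \<circ> ?c = ?c \<circ> g"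
  obtain x where ax: "a x \<noteq> x" using a_rist(2) by (auto simp: fun_eq_iff)
  have x: "x \<in> tverts m" using ax tree_aut_outside[OF a] by blast
  have zx: "prefix z x" using a_rist(1) x ax by (auto simp: rist_def)
  have z: "z \<in> tverts m" using tverts_prefix_closed[OF zx x] .
  have gx: "g x \<in> tverts m" "prefix (g z) (g x)"
    using tree_aut_closed[OF g x] tree_aut_prefix[OF g zx x] by auto
  have k': "is_tree_aut m ?k'" by (rule tree_aut_inv(1)[OF k])
  have "?k' z \<noteq> z" "?k' (g z) \<noteq> z" using moved(2,3) tree_aut_inv(3)[OF k] by metis+
  have "\<not> prefix z (?k' x)"
    using tree_aut_image_not_prefix[OF k' zx x] \<open>?k' z \<noteq> z\<close> by simp
  then have c_x: "?c x = a x"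
    using rist_inv_fixes_outside[OF a a_rist(1)] tree_aut_closed[OF k' x] tree_aut_inv(3)[OF k]
    by simp
  have "\<not> prefix z (?k' (g x))"
    using tree_aut_image_not_prefix[OF k' gx(2) gx(1)] \<open>?k' (g z) \<noteq> z\<close>
      tree_aut_length[OF g z] by simp
  moreover have "\<not> prefix z (g x)"
    using tree_aut_image_not_prefix[OF g zx x] moved(1) by simp
  ultimately have c_gx: "?c (g x) = g x"
    using rist_inv_fixes_outside[OF a a_rist(1)] tree_aut_closed[OF k' gx(1)]
      tree_aut_inv(3)[OF k] a_rist(1) gx(1) by (simp add: rist_def)
  have "g (a x) = g x" using fun_cong[OF commute, of x] c_x c_gx by simp
  with ax tree_aut_inj[OF g] show False by (simp add: inj_eq)
qed

lemma centralising_agrees_on_moved_vertex: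
  assumes wb: "weakly_branch m G" and N: "N \<lhd> (AutT m)\<lparr>carrier := G\<rparr>"
    and g: "g \<in> G" "\<forall>n\<in>N. g \<circ> n = n \<circ> g" and k: "k \<in> N"
    and z: "z \<in> tverts m" "1 \<le> length z" and moved: "g z \<noteq> z" "k z \<noteq> z"
  shows "k z = g z"
proof (rule ccontr)
  assume "k z \<noteq> g z"
  have G: "subgroup G (AutT m)" using wb by (rule weakly_branch_subgroup)
  have "k \<in> G" using k normal_imp_subgroup[OF N] subgroup.subset by fastforce
  obtain a where a: "a \<in> rist m G z" "a \<noteq> id" using weakly_branch_rist_nontrivial[OF wb z] by blast
  have "a \<in> G" using a(1) by (simp add: rist_def)
  have "a \<circ> k \<circ> inv\<^bsub>AutT m\<^esub> a \<circ> inv\<^bsub>AutT m\<^esub> k \<in> N"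
    using normal_AutT_commutator[OF G N \<open>a \<in> G\<close> k] .
  with g(2) rist_commutator_not_commuting[OF subgroup_AutT_tree_aut[OF G g(1)]
      subgroup_AutT_tree_aut[OF G \<open>k \<in> G\<close>] subgroup_AutT_tree_aut[OF G \<open>a \<in> G\<close>]
      a moved \<open>k z \<noteq> g z\<close>]
  show False by blast
qed

lemma tree_aut_moves_vertices_at_deep_levels:
  assumes m: "\<And>i. 0 < m i" and g: "is_tree_aut m g" "g \<noteq> id"
  shows "\<exists>d. \<forall>L\<ge>d. \<exists>y\<in>tlevel m L. g y \<noteq> y"
proof -
  obtain w where w: "g w \<noteq> w" using g(2) by (auto simp: fun_eq_iff)
  have "w \<in> tverts m" using w tree_aut_outside[OF g(1)] by blast
  have "\<exists>y\<in>tlevel m L. g y \<noteq> y" if "length w \<le> L" for L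
  proof
    let ?y = "w @ replicate (L - length w) 0"
    have "?y \<in> tverts m" using tverts_append_zeros[OF m \<open>w \<in> tverts m\<close>] .
    then show "?y \<in> tlevel m L" using that by (simp add: tlevel_def)
    show "g ?y \<noteq> ?y" using tree_aut_moves_descendants[OF g(1) w _ \<open>?y \<in> tverts m\<close>] by simp
  qed
  then show ?thesis by blast
qed

lemma normal_subgroup_moves_deep_vertices:
  assumes m: "\<And>i. 0 < m i" and wb: "weakly_branch m G"
    and N: "N \<lhd> (AutT m)\<lparr>carrier := G\<rparr>" "N \<noteq> {id}"
  shows "\<exists>d. \<forall>L\<ge>d. \<forall>y\<in>tlevel m L. \<exists>n\<in>N. n y \<noteq> y"
proof -
  have G: "subgroup G (AutT m)" using wb by (rule weakly_branch_subgroup)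
  have "id \<in> N" using subgroup.one_closed[OF normal_imp_subgroup[OF N(1)]] by simp
  then obtain n0 where n0: "n0 \<in> N" "n0 \<noteq> id" using N(2) by blast
  have "n0 \<in> G" using n0(1) normal_imp_subgroup[OF N(1)] subgroup.subset by fastforce
  then have n0_aut: "is_tree_aut m n0" using subgroup_AutT_tree_aut[OF G] by blast
  obtain d where d: "\<forall>L\<ge>d. \<exists>u\<in>tlevel m L. n0 u \<noteq> u"
    using tree_aut_moves_vertices_at_deep_levels[OF m n0_aut n0(2)] by blast
  have "\<exists>n\<in>N. n y \<noteq> y" if "d \<le> L" "y \<in> tlevel m L" for L y
  proof -
    obtain u where u: "u \<in> tlevel m L" "n0 u \<noteq> u" using d \<open>d \<le> L\<close> by blast
    obtain h where h: "h \<in> G" "h u = y"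
      using wb u(1) \<open>y \<in> tlevel m L\<close> unfolding weakly_branch_def level_transitive_def by blast
    have h_aut: "is_tree_aut m h" using subgroup_AutT_tree_aut[OF G h(1)] .
    have "(h \<circ> n0 \<circ> inv\<^bsub>AutT m\<^esub> h) y = h (n0 u)"
      using tree_aut_inv(2)[OF h_aut] h(2) by auto
    then have "(h \<circ> n0 \<circ> inv\<^bsub>AutT m\<^esub> h) y \<noteq> y"
      using u(2) h(2) tree_aut_inj[OF h_aut] by (metis injD)
    with normal_AutT_conj[OF G N(1) h(1) n0(1)] show ?thesis by blast
  qed
  then show ?thesis by blast
qed

lemma weakly_branch_normal_centraliser_trivial:
  assumes m: "\<And>i. 0 < m i" and wb: "weakly_branch m G"
    and N: "N \<lhd> (AutT m)\<lparr>carrier := G\<rparr>" "N \<noteq> {id}"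
    and g: "g \<in> G" "\<forall>n\<in>N. g \<circ> n = n \<circ> g"
  shows "g = id"
proof (rule ccontr)
  assume "g \<noteq> id"
  have G: "subgroup G (AutT m)" using wb by (rule weakly_branch_subgroup)
  have N_G: "N \<subseteq> G" using normal_imp_subgroup[OF N(1)] subgroup.subset by fastforce
  obtain d1 where d1: "\<forall>L\<ge>d1. \<exists>y\<in>tlevel m L. g y \<noteq> y"
    using tree_aut_moves_vertices_at_deep_levels[OF m subgroup_AutT_tree_aut[OF G g(1)] \<open>g \<noteq> id\<close>]
    by blast
  obtain d2 where d2: "\<forall>L\<ge>d2. \<forall>y\<in>tlevel m L. \<exists>n\<in>N. n y \<noteq> y"
    using normal_subgroup_moves_deep_vertices[OF m wb N] by blast
  obtain y where y: "y \<in> tlevel m (max 1 (max d1 d2))" "g y \<noteq> y"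
    using d1[rule_format, of "max 1 (max d1 d2)"] by (auto simp: le_max_iff_disj)
  obtain n where n: "n \<in> N" "n y \<noteq> y"
    using d2[rule_format, OF _ y(1)] by (auto simp: le_max_iff_disj)
  have n_aut: "is_tree_aut m n" using n(1) N_G subgroup_AutT_tree_aut[OF G] by blast
  have y_vert: "y \<in> tverts m" "1 \<le> length y" using y(1) by (auto simp: tlevel_def)
  obtain h where h: "h \<in> rist m G y" "h \<noteq> id"
    using weakly_branch_rist_nontrivial[OF wb y_vert] by blast
  have "h \<in> G" using h(1) by (simp add: rist_def)
  then have h_aut: "is_tree_aut m h" using subgroup_AutT_tree_aut[OF G] by blast
  obtain z where hz: "h z \<noteq> z" using h(2) by (auto simp: fun_eq_iff)
  have z: "z \<in> tverts m" "prefix y z" using hz h(1) tree_aut_outside[OF h_aut] by (auto simp: rist_def)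
  have "1 \<le> length z" using prefix_length_le[OF z(2)] y_vert(2) by simp
  have "g z \<noteq> z" "n z \<noteq> z"
    using tree_aut_moves_descendants z subgroup_AutT_tree_aut[OF G g(1)] y(2) n_aut n(2) by blast+
  then have nz: "n z = g z"
    using centralising_agrees_on_moved_vertex[OF wb N(1) g n(1) z(1) \<open>1 \<le> length z\<close>] by blast
  \<comment> \<open>The conjugate h n h\<inverse> also moves z, so it too must send z to g z = n z; but it sends
      z to n (h\<inverse> z), and h\<inverse> z \<noteq> z.\<close>
  let ?z' = "(inv\<^bsub>AutT m\<^esub> h) z"
  have z': "?z' \<in> tverts m" "h ?z' = z"
    using tree_aut_closed[OF tree_aut_inv(1)[OF h_aut] z(1)] tree_aut_inv(3)[OF h_aut] by auto
  have "prefix y ?z'" using z' hz h(1) by (auto simp: rist_def)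
  then have out: "\<not> prefix y (n ?z')" using tree_aut_image_not_prefix[OF n_aut _ z'(1)] n(2) by blast
  let ?k = "h \<circ> n \<circ> inv\<^bsub>AutT m\<^esub> h"
  have "?k z = n ?z'" using h(1) tree_aut_closed[OF n_aut z'(1)] out by (simp add: rist_def)
  moreover have "?k z = g z"
    using centralising_agrees_on_moved_vertex[OF wb N(1) g normal_AutT_conj[OF G N(1) \<open>h \<in> G\<close> n(1)]
        z(1) \<open>1 \<le> length z\<close> \<open>g z \<noteq> z\<close>] \<open>?k z = n ?z'\<close> out z(2) by fastforce
  ultimately have "n ?z' = n z" using nz by simp
  then show False using tree_aut_inj[OF n_aut] z' hz by (auto simp: inj_eq)
qed

theorem lemma3p3:
  fixes m :: "nat \<Rightarrow> nat"
    and G N :: "(nat list \<Rightarrow> nat list) set"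
  assumes "\<And>n. m n \<ge> 2"
    and "weakly_branch m G"
    and "N \<lhd> (AutT m)\<lparr>carrier := G\<rparr>"
    and "N \<noteq> {id}"
  shows "virtual_retract ((AutT m)\<lparr>carrier := G\<rparr>) N
           \<longleftrightarrow> finite (rcosets\<^bsub>(AutT m)\<lparr>carrier := G\<rparr>\<^esub> N)"
proof -
  interpret G: group "(AutT m)\<lparr>carrier := G\<rparr>"
    using group.subgroup_imp_group[OF AutT_group weakly_branch_subgroup[OF assms(2)]] .
  have m_pos: "0 < m i" for i using assms(1)[of i] by simp
  have "c = \<one>\<^bsub>(AutT m)\<lparr>carrier := G\<rparr>\<^esub>"
    if "c \<in> carrier ((AutT m)\<lparr>carrier := G\<rparr>)"
      "\<forall>n\<in>N. c \<otimes>\<^bsub>(AutT m)\<lparr>carrier := G\<rparr>\<^esub> n = n \<otimes>\<^bsub>(AutT m)\<lparr>carrier := G\<rparr>\<^esub> c" for c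
    using that weakly_branch_normal_centraliser_trivial[OF m_pos assms(2-4)] by simp
  then show ?thesis
    using G.virtual_retract_imp_finite_index[OF assms(3)]
      G.finite_index_imp_virtual_retract[OF normal_imp_subgroup[OF assms(3)]] by blast
qed

end
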